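(* Let $\tau\subset\mathbb{Z}^4_{\ge0}$ be a B-facet which has an internal V-face consisting of exactly three (affinely independent) points. Then $\tau$ is a $B_1$-facet, or a $B_2$-facet, or the standard cross-polytope $\{(1,1,0,0),(1,0,1,0),(1,0,0,1),(0,1,1,0),(0,1,0,1),(0,0,1,1)\}$.
   Context: A polytope is a finite subset of $\mathbb{Z}^n$; its dimension is the dimension of its affine span; a face of a finite set $S$ is $S\cap G$ for a face $G$ of the convex hull of $S$. A $k$-simplex is a set of $k+1$ affinely independent points; a $k$-simplex $S\subset\mathbb{Z}^n_{\ge0}$ is a B-simplex if there is an index $i$ with exactly $k$ vertices in $\{x_i=0\}$ and the remaining vertex having $x_i=1$. A B-facet in $\mathbb{Z}^n_{\ge0}$ is a finite set $\tau\subset\mathbb{Z}^n_{\ge0}$ whose affine span is a hyperplane $\{\langle a,x\rangle=b\}$ with all $a_j>0$, such that every $(n-1)$-simplex with vertices in $\tau$ is a B-simplex. A face $F$ of $\tau$ is a V-face if it is contained in a coordinate subspace (linear span of some standard basis vectors) of dimension $\dim F+1$; a V-face $F$ is internal if no nonempty proper face of $F$ is a V-face. $\tau\subset\mathbb{Z}^4_{\ge0}$ is a $B_1$-facet if there is an index $i$ such that exactly one point of $\tau$ has nonzero $x_i$, and it has $x_i=1$; it is a $B_2$-facet if there are distinct indices $i,j$ with $(x_i,x_j)\in\{(0,0),(1,0),(0,1)\}$ for all $x\in\tau$. *)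

theory Defs
  imports "HOL-Analysis.Analysis"
begin

text \<open>Points of Z^4 are represented as vectors in real^4 with nonnegative integer coordinates.\<close>

definition lattice_nonneg :: "(real^4) set" where
  "lattice_nonneg = {x. \<forall>i. x $ i \<in> \<int> \<and> x $ i \<ge> 0}"

definition face_set :: "(real^4) set \<Rightarrow> (real^4) set \<Rightarrow> bool" where
  "face_set F S \<longleftrightarrow> (\<exists>G. G face_of convex hull S \<and> F = S \<inter> G)"

definition B_simplex :: "(real^4) set \<Rightarrow> bool" where
  "B_simplex S \<longleftrightarrow> (\<exists>i. card {x\<in>S. x $ i = 0} = card S - 1 \<and>
                        (\<forall>x\<in>S. x $ i \<noteq> 0 \<longrightarrow> x $ i = 1))"

definition B_facet :: "(real^4) set \<Rightarrow> bool" where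
  "B_facet \<tau> \<longleftrightarrow> finite \<tau> \<and> \<tau> \<subseteq> lattice_nonneg \<and>
     (\<exists>a b. (\<forall>j. a $ j > 0) \<and> affine hull \<tau> = {x. a \<bullet> x = b}) \<and>
     (\<forall>S. S \<subseteq> \<tau> \<and> card S = 4 \<and> \<not> affine_dependent S \<longrightarrow> B_simplex S)"

definition V_face :: "(real^4) set \<Rightarrow> (real^4) set \<Rightarrow> bool" where
  "V_face \<tau> F \<longleftrightarrow> face_set F \<tau> \<and>
     (\<exists>I::4 set. int (card I) = aff_dim F + 1 \<and> F \<subseteq> span ((\<lambda>i. axis i 1) ` I))"

definition internal_V_face :: "(real^4) set \<Rightarrow> (real^4) set \<Rightarrow> bool" where
  "internal_V_face \<tau> F \<longleftrightarrow> V_face \<tau> F \<and>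
     (\<forall>G. face_set G F \<and> G \<noteq> {} \<and> G \<noteq> F \<longrightarrow> \<not> V_face \<tau> G)"

definition B1_facet :: "(real^4) set \<Rightarrow> bool" where
  "B1_facet \<tau> \<longleftrightarrow> (\<exists>i. \<exists>p\<in>\<tau>. p $ i = 1 \<and> (\<forall>x\<in>\<tau>. x $ i \<noteq> 0 \<longrightarrow> x = p))"

definition B2_facet :: "(real^4) set \<Rightarrow> bool" where
  "B2_facet \<tau> \<longleftrightarrow> (\<exists>i j. i \<noteq> j \<and>
     (\<forall>x\<in>\<tau>. (x $ i, x $ j) \<in> {(0,0),(1,0),(0,1)}))"

definition cross_polytope :: "(real^4) set" where
  "cross_polytope = {vector [1,1,0,0], vector [1,0,1,0], vector [1,0,0,1],
                     vector [0,1,1,0], vector [0,1,0,1], vector [0,0,1,1]}"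

end

theory Submission
  imports Defs
begin

(* Let x_k be the coordinate vanishing on the triangle F. Since conv F is a facet of conv tau lying
   in the supporting hyperplane x_k = 0, every other point v of tau has x_k > 0, and the B-simplex
   condition on F + v forces x_k = 1. Internality of F means that no two points of F share a zero
   coordinate other than k and no point of F has two zero coordinates other than k.
   For two further points v, w at most one of the simplices {s, t, v, w} with s, t in F is
   degenerate, and the B-simplex condition on the other two yields a coordinate i vanishing at v
   and w which is 0 at one point of F and 1 at the other two. If tau has a single point off F it is
   a B1-facet; if such a coordinate vanishes at all points off F, tau is a B2-facet for i and k.
   Otherwise three such coordinates occur, and evaluating the hyperplane equation at F and at a
   third point off F forces all weights to be equal. Then every point of tau is a 0/1 vector with
   coordinate sum 2, and tau has at least six points: it is the cross-polytope. *)

lemma mem_span_axes_iff: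
  fixes x :: "real^'n"
  shows "x \<in> span ((\<lambda>i. axis i 1) ` I) \<longleftrightarrow> (\<forall>j. j \<notin> I \<longrightarrow> x$j = 0)"
proof
  assume "x \<in> span ((\<lambda>i. axis i 1) ` I)"
  moreover have "subspace {y::real^'n. \<forall>j. j \<notin> I \<longrightarrow> y$j = 0}"
    by (auto simp: subspace_def)
  moreover have "(\<lambda>i. axis i 1) ` I \<subseteq> {y::real^'n. \<forall>j. j \<notin> I \<longrightarrow> y$j = 0}"
    by (auto simp: axis_def)
  ultimately show "\<forall>j. j \<notin> I \<longrightarrow> x$j = 0"
    using span_minimal by blast
next
  assume "\<forall>j. j \<notin> I \<longrightarrow> x$j = 0"
  then have "x = (\<Sum>i\<in>I. x$i *\<^sub>R axis i 1)"
    by (auto simp: vec_eq_iff sum_component axis_def if_distrib sum.delta cong: if_cong)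
  also have "\<dots> \<in> span ((\<lambda>i. axis i 1) ` I)"
    by (intro span_sum span_mul span_base) auto
  finally show "x \<in> span ((\<lambda>i. axis i 1) ` I)" .
qed

lemma affine_independent_insert_coordinate:
  fixes S :: "(real^'n) set"
  assumes "\<not> affine_dependent S" "\<forall>x\<in>S. x$i = c" "y$i \<noteq> c"
  shows "\<not> affine_dependent (insert y S)"
proof -
  have "affine {x::real^'n. x$i = c}"
    using affine_hyperplane[of "axis i (1::real)" c] by (simp add: inner_axis' inner_real_def)
  then have "affine hull S \<subseteq> {x. x$i = c}"
    using assms(2) by (intro hull_minimal) auto
  then show ?thesis
    using assms(1,3) affine_independent_insert by blast
qed

lemma Int_convex_hull_subset_affine_independent:
  fixes S :: "'a::euclidean_space set"
  assumes "\<not> affine_dependent S" "T \<subseteq> S"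
  shows "S \<inter> convex hull T = T"
proof (intro equalityI subsetI)
  fix z assume z: "z \<in> S \<inter> convex hull T"
  show "z \<in> T"
  proof (rule ccontr)
    assume "z \<notin> T"
    then have "convex hull T \<subseteq> convex hull (S - {z})"
      using assms(2) by (intro hull_mono) blast
    also have "\<dots> \<subseteq> affine hull (S - {z})"
      by (rule convex_hull_subset_affine_hull)
    finally have "convex hull T \<subseteq> affine hull (S - {z})" .
    then show False
      using z assms(1) unfolding affine_dependent_def by blast
  qed
qed (use assms(2) in \<open>auto intro: hull_inc\<close>)

lemma face_of_convex_hull_eq_convex_hull_Int:
  fixes S :: "'a::euclidean_space set"
  assumes "finite S" "G face_of convex hull S"
  shows "G = convex hull (S \<inter> G)"
proof
  obtain S' where "S' \<subseteq> S" "G = convex hull S'"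
    using face_of_convex_hull_subset[OF finite_imp_compact[OF assms(1)] assms(2)] .
  moreover have "S' \<subseteq> G"
    by (simp add: \<open>G = convex hull S'\<close> hull_subset)
  ultimately show "G \<subseteq> convex hull (S \<inter> G)"
    by (metis Int_greatest hull_mono)
  show "convex hull (S \<inter> G) \<subseteq> G"
    using face_of_imp_convex[OF assms(2)] by (intro hull_minimal) auto
qed

lemma hyperplane_not_subset_coordinate_hyperplane:
  fixes a :: "real^'n"
  assumes "a$j \<noteq> 0" "j \<noteq> k"
  shows "\<not> {x. a \<bullet> x = b} \<subseteq> {x. x$k = 0}"
proof -
  define x :: "real^'n" where "x = axis k 1 + ((b - a$k) / a$j) *\<^sub>R axis j 1"
  have "a \<bullet> x = b"
    using assms by (simp add: x_def inner_add_right inner_axis inner_real_def)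
  moreover have "x$k = 1"
    using assms by (simp add: x_def axis_def)
  ultimately
  show ?thesis by auto
qed

lemma card_filter_eq_card_minus_1E:
  assumes "finite S" "S \<noteq> {}" "card {x\<in>S. P x} = card S - 1"
  obtains y where "y \<in> S" "\<not> P y" "\<forall>x\<in>S. x \<noteq> y \<longrightarrow> P x"
proof -
  have "card {x\<in>S. \<not> P x} = card (S - {x\<in>S. P x})"
    by (rule arg_cong[where f = card]) blast
  also have "\<dots> = card S - card {x\<in>S. P x}"
    using assms(1) by (intro card_Diff_subset) auto
  also have "\<dots> = 1"
    using assms(3) card_gt_0_iff[of S] assms(1,2) by linarith
  finally have "card {x\<in>S. \<not> P x} = 1" .
  then obtain y where y: "{x\<in>S. \<not> P x} = {y}"
    using card_1_singletonE by blast
  have "y \<in> {x\<in>S. \<not> P x}"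
    by (simp add: y)
  moreover have "\<forall>x\<in>S. x \<noteq> y \<longrightarrow> P x"
    by (metis (mono_tags, lifting) y mem_Collect_eq singletonD)
  ultimately show ?thesis
    using that by blast
qed

lemma B_simplexE:
  assumes "B_simplex S" "finite S" "S \<noteq> {}"
  obtains i y where "y \<in> S" "y$i = 1" "\<forall>x\<in>S. x \<noteq> y \<longrightarrow> x$i = 0"
proof -
  obtain i where card: "card {x\<in>S. x$i = 0} = card S - 1"
    and one: "\<forall>x\<in>S. x$i \<noteq> 0 \<longrightarrow> x$i = 1"
    using assms(1) unfolding B_simplex_def by blast
  obtain y where y: "y \<in> S" "y$i \<noteq> 0" "\<forall>x\<in>S. x \<noteq> y \<longrightarrow> x$i = 0"
    using card_filter_eq_card_minus_1E[OF assms(2,3) card] .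
  with one have "y$i = 1"
    by blast
  with y show ?thesis
    using that by blast
qed

lemma UNIV_4_eq:
  fixes i j k m :: 4
  assumes "distinct [i, j, k, m]"
  shows "UNIV = {i, j, k, m}"
  using assms by (intro card_subset_eq[symmetric]) auto

lemma obtain_fourth_index:
  fixes i j k :: 4
  assumes "distinct [i, j, k]"
  obtains m where "distinct [i, j, k, m]"
proof -
  have "card {i, j, k} \<noteq> card (UNIV :: 4 set)"
    using assms by simp
  then obtain m where "m \<notin> {i, j, k}"
    by (metis UNIV_eq_I)
  then show ?thesis
    using assms by (intro that[of m]) auto
qed

lemma sum_UNIV_4_distinct:
  fixes f :: "4 \<Rightarrow> 'a::comm_monoid_add"
  assumes "distinct [i, j, k, m]"
  shows "(\<Sum>l\<in>UNIV. f l) = f i + f j + f k + f m"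
  using assms by (simp add: UNIV_4_eq add.assoc)

lemma vector_4 [simp]:
  "(vector [x, y, z, w] :: 'a::zero^4)$1 = x"
  "(vector [x, y, z, w] :: 'a::zero^4)$2 = y"
  "(vector [x, y, z, w] :: 'a::zero^4)$3 = z"
  "(vector [x, y, z, w] :: 'a::zero^4)$4 = w"
  unfolding vector_def by simp_all

lemma vector_mem_cross_polytope:
  fixes c1 c2 c3 c4 :: real
  assumes "c1 = 0 \<or> c1 = 1" "c2 = 0 \<or> c2 = 1" "c3 = 0 \<or> c3 = 1" "c4 = 0 \<or> c4 = 1"
    and "c1 + c2 + c3 + c4 = 2"
  shows "vector [c1, c2, c3, c4] \<in> cross_polytope"
  using assms unfolding cross_polytope_def by (elim disjE) simp_all

lemma cross_polytopeI:
  fixes x :: "real^4"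
  assumes "\<forall>j. x$j = 0 \<or> x$j = 1" "(\<Sum>j\<in>UNIV. x$j) = 2"
  shows "x \<in> cross_polytope"
proof -
  have x: "x = vector [x$1, x$2, x$3, x$4]"
    by (simp add: vec_eq_iff forall_4)
  show ?thesis
    by (subst x, intro vector_mem_cross_polytope) (use assms in \<open>auto simp: sum_4\<close>)
qed

lemma card_cross_polytope: "card cross_polytope = 6"
  unfolding cross_polytope_def by (simp add: vec_eq_iff forall_4)

lemma lattice_nonneg_coord_01:
  assumes "x \<in> lattice_nonneg" "x$j \<le> 1"
  shows "x$j = 0 \<or> x$j = 1"
proof -
  have "x$j \<in> \<int>" "0 \<le> x$j"
    using assms(1) unfolding lattice_nonneg_def by auto
  then obtain n where n: "x$j = of_int n"
    by (auto elim: Ints_cases)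
  then have "0 \<le> n" "n \<le> 1"
    using \<open>0 \<le> x$j\<close> assms(2) by simp_all
  then show ?thesis
    using n by (cases "n = 0") simp_all
qed

lemma V_face_triangle_in_coordinate_hyperplane:
  assumes "V_face \<tau> F" "card F = 3" "\<not> affine_dependent F"
  obtains k where "\<forall>x\<in>F. x$k = 0"
proof -
  obtain I where card_I: "int (card I) = aff_dim F + 1"
    and F_span: "F \<subseteq> span ((\<lambda>i. axis i 1) ` I)"
    using assms(1) unfolding V_face_def by blast
  have "card I = 3"
    using card_I aff_dim_affine_independent[OF assms(3)] assms(2) by simp
  then have "I \<noteq> UNIV"
    by force
  then obtain k where "k \<notin> I"
    by blast
  then show ?thesis
    using that F_span mem_span_axes_iff by blast
qed

locale internal_triangle =
  fixes \<tau> F :: "(real^4) set" and a :: "real^4" and b :: real and k :: 4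
  assumes B_facet: "B_facet \<tau>"
    and affine_hull_eq: "affine hull \<tau> = {x. a \<bullet> x = b}"
    and a_pos: "\<And>j. a$j > 0"
    and internal: "internal_V_face \<tau> F"
    and card_F: "card F = 3"
    and F_indep: "\<not> affine_dependent F"
    and F_coord_k: "\<And>x. x \<in> F \<Longrightarrow> x$k = 0"
begin

lemma finite_\<tau>: "finite \<tau>" and \<tau>_lattice: "\<tau> \<subseteq> lattice_nonneg"
  using B_facet unfolding B_facet_def by blast+

lemma B_simplex_subsetE:
  assumes "S \<subseteq> \<tau>" "card S = 4" "\<not> affine_dependent S"
  obtains i y where "y \<in> S" "y$i = 1" "\<forall>x\<in>S. x \<noteq> y \<longrightarrow> x$i = 0"
proof -
  have "B_simplex S"
    using B_facet assms unfolding B_facet_def by blast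
  moreover have "finite S" "S \<noteq> {}"
    using assms(2) card.infinite by force+
  ultimately show ?thesis
    by (metis B_simplexE that)
qed

lemma on_hyperplane: "x \<in> \<tau> \<Longrightarrow> a \<bullet> x = b"
  by (metis affine_hull_eq hull_inc mem_Collect_eq)

lemma aff_dim_\<tau>: "aff_dim \<tau> = 3"
proof -
  have "a \<noteq> 0"
    using a_pos by (metis less_irrefl zero_index)
  then have "aff_dim {x. a \<bullet> x = b} = 3"
    by simp
  then show ?thesis
    using affine_hull_eq by (metis aff_dim_affine_hull)
qed

lemma F_subset: "F \<subseteq> \<tau>"
  and convex_hull_F_face_of: "convex hull F face_of convex hull \<tau>"
  and Int_convex_hull_F: "\<tau> \<inter> convex hull F = F"
proof -
  have "face_set F \<tau>"
    using internal unfolding internal_V_face_def V_face_def by blast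
  then obtain G where G: "G face_of convex hull \<tau>" and F_eq: "F = \<tau> \<inter> G"
    unfolding face_set_def by blast
  have G_eq: "G = convex hull F"
    using face_of_convex_hull_eq_convex_hull_Int[OF finite_\<tau> G] unfolding F_eq .
  show "F \<subseteq> \<tau>"
    using F_eq by blast
  show "convex hull F face_of convex hull \<tau>"
    using G unfolding G_eq .
  show "\<tau> \<inter> convex hull F = F"
    unfolding G_eq[symmetric] using F_eq by (rule sym)
qed

lemma face_set_subset_F:
  assumes "G \<subseteq> F"
  shows "face_set G F" "face_set G \<tau>"
proof -
  have face: "convex hull G face_of convex hull F"
    using assms face_of_convex_hull_affine_independent[OF F_indep] by blast
  have F_Int: "F \<inter> convex hull G = G"
    using Int_convex_hull_subset_affine_independent[OF F_indep assms] .
  then show "face_set G F"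
    using face unfolding face_set_def by blast
  have "\<tau> \<inter> convex hull G = G"
    using hull_mono[OF assms] Int_convex_hull_F F_Int by blast
  then show "face_set G \<tau>"
    using face_of_trans[OF face convex_hull_F_face_of] unfolding face_set_def by blast
qed

lemma no_proper_V_face:
  assumes "G \<subseteq> F" "G \<noteq> {}" "G \<noteq> F"
    and "card J = card G" "G \<subseteq> span ((\<lambda>i. axis i 1) ` J)"
  shows False
proof -
  have "int (card G) = aff_dim G + 1"
    using aff_dim_affine_independent[OF affine_independent_subset[OF F_indep assms(1)]] by simp
  then have "V_face \<tau> G"
    unfolding V_face_def using face_set_subset_F(2)[OF assms(1)] assms(4,5)
    by (intro conjI exI[of _ J]) simp_all
  then show False
    using internal face_set_subset_F(1)[OF assms(1)] assms(2,3) unfolding internal_V_face_def by blast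
qed

lemma F_common_zero_coord:
  assumes "i \<noteq> k" "x \<in> F" "y \<in> F" "x$i = 0" "y$i = 0"
  shows "x = y"
proof (rule ccontr)
  assume "x \<noteq> y"
  then have card: "card (UNIV - {i, k}) = card {x, y}"
    using assms(1) by (simp add: card_Diff_subset)
  have span: "{x, y} \<subseteq> span ((\<lambda>i. axis i 1) ` (UNIV - {i, k}))"
    using assms F_coord_k by (auto simp: mem_span_axes_iff)
  have "card {x, y} \<noteq> card F"
    using card_F \<open>x \<noteq> y\<close> by simp
  then have "{x, y} \<noteq> F"
    by blast
  moreover have "{x, y} \<subseteq> F" "{x, y} \<noteq> {}"
    using assms(2,3) by simp_all
  ultimately show False
    using no_proper_V_face[OF _ _ _ card span] by blast
qed

lemma F_two_zero_coords:
  assumes "i \<noteq> k" "j \<noteq> k" "x \<in> F" "x$i = 0" "x$j = 0"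
  shows "i = j"
proof (rule ccontr)
  assume "i \<noteq> j"
  then have card: "card (UNIV - {i, j, k}) = card {x}"
    using assms(1,2) by (simp add: card_Diff_subset)
  have span: "{x} \<subseteq> span ((\<lambda>i. axis i 1) ` (UNIV - {i, j, k}))"
    using assms F_coord_k by (auto simp: mem_span_axes_iff)
  have "card {x} \<noteq> card F"
    using card_F by simp
  then have "{x} \<noteq> F"
    by blast
  moreover have "{x} \<subseteq> F"
    using assms(3) by simp
  ultimately show False
    using no_proper_V_face[OF _ _ _ card span] by blast
qed

lemma F_distinct_pair_avoiding:
  obtains s t where "s \<in> F" "t \<in> F" "s \<noteq> t" "s \<noteq> y" "t \<noteq> y"
  using card_F unfolding card_3_iff by (metis insertCI)

lemma exists_coord_k_nonzero: "\<exists>x\<in>\<tau>. x$k \<noteq> 0"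
proof (rule ccontr)
  assume "\<not> ?thesis"
  then have "affine hull \<tau> \<subseteq> {x. x$k = 0}"
    using affine_hyperplane[of "axis k (1::real)" 0]
    by (intro hull_minimal) (auto simp: inner_axis' inner_real_def)
  moreover obtain j :: 4 where "j \<noteq> k"
    by (metis zero_neq_one)
  ultimately show False
    using hyperplane_not_subset_coordinate_hyperplane[of a j k b] a_pos affine_hull_eq
    by (metis less_irrefl)
qed

lemma coord_k_zero_imp_mem_F:
  assumes "x \<in> \<tau>" "x$k = 0"
  shows "x \<in> F"
proof -
  define G where "G = convex hull \<tau> \<inter> {y. axis k 1 \<bullet> y = 0}"
  have "convex hull \<tau> \<subseteq> {y. axis k 1 \<bullet> y \<ge> 0}"
    using \<tau>_lattice convex_halfspace_ge[of 0 "axis k (1::real)"]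
    by (intro hull_minimal) (auto simp: lattice_nonneg_def inner_axis')
  then have G_face: "G face_of convex hull \<tau>"
    unfolding G_def by (intro face_of_Int_supporting_hyperplane_ge) auto
  obtain x0 where "x0 \<in> \<tau>" "x0$k \<noteq> 0"
    using exists_coord_k_nonzero by blast
  then have "G \<noteq> convex hull \<tau>"
    unfolding G_def by (auto simp: inner_axis' dest: hull_inc)
  then have "aff_dim G < 3"
    using face_of_aff_dim_lt[OF convex_convex_hull G_face] aff_dim_\<tau> by (simp add: aff_dim_convex_hull)
  have "convex hull F \<subseteq> {y. y$k = 0}"
    using F_coord_k convex_hyperplane[of "axis k (1::real)" 0]
    by (intro hull_minimal) (auto simp: inner_axis' inner_real_def)
  then have "convex hull F \<subseteq> G"
    using hull_mono[OF F_subset] unfolding G_def by (auto simp: inner_axis')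
  then have "convex hull F face_of G"
    using face_of_subset[OF convex_hull_F_face_of _ face_of_imp_subset[OF G_face]] by blast
  \<comment> \<open>a face of G of the same dimension as G\<close>
  then have "convex hull F = G"
    using face_of_aff_dim_lt[OF face_of_imp_convex[OF G_face]] \<open>aff_dim G < 3\<close>
      aff_dim_affine_independent[OF F_indep] card_F
    by (fastforce simp: aff_dim_convex_hull)
  then show ?thesis
    using assms Int_convex_hull_F unfolding G_def by (auto simp: inner_axis' dest: hull_inc)
qed

lemma coord_k_outside_F:
  assumes "x \<in> \<tau> - F"
  shows "x$k = 1"
proof -
  have "x$k \<noteq> 0"
    using coord_k_zero_imp_mem_F assms by blast
  then have "\<not> affine_dependent (insert x F)"
    using affine_independent_insert_coordinate[OF F_indep] F_coord_k by blast
  moreover have "card (insert x F) = 4"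
    using assms card_F finite_subset[OF F_subset finite_\<tau>] by simp
  moreover have "insert x F \<subseteq> \<tau>"
    using assms F_subset by blast
  ultimately obtain i y where y: "y \<in> insert x F" "y$i = 1"
    and zero: "\<forall>z\<in>insert x F. z \<noteq> y \<longrightarrow> z$i = 0"
    using B_simplex_subsetE by metis
  obtain s t where "s \<in> F" "t \<in> F" "s \<noteq> t" "s \<noteq> y" "t \<noteq> y"
    using F_distinct_pair_avoiding .
  then have "i = k"
    using zero F_common_zero_coord by blast
  then have "y = x"
    using y F_coord_k by auto
  then show ?thesis
    using y \<open>i = k\<close> by simp
qed

lemma outside_F_nonempty: "\<tau> - F \<noteq> {}"
  using aff_dim_\<tau> aff_dim_affine_independent[OF F_indep] card_F F_subset by auto

lemma outside_eq_if_two_zero_coords: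
  assumes "v \<in> \<tau> - F" "w \<in> \<tau> - F" "distinct [i, j, k]"
    and "v$i = 0" "v$j = 0" "w$i = 0" "w$j = 0"
  shows "v = w"
proof -
  obtain m where m: "distinct [i, j, k, m]"
    using obtain_fourth_index[OF assms(3)] .
  have vw_k: "v$k = 1" "w$k = 1"
    using coord_k_outside_F assms(1,2) by simp_all
  then have "a$m * v$m + a$k = b" "a$m * w$m + a$k = b"
    using on_hyperplane[of v] on_hyperplane[of w] assms
    unfolding inner_vec_def sum_UNIV_4_distinct[OF m] by simp_all
  then have "a$m * v$m = a$m * w$m"
    by linarith
  then have "v$m = w$m"
    using a_pos[of m] by simp
  have "v$l = w$l" for l
  proof -
    have "l \<in> {i, j, k, m}"
      using UNIV_4_eq[OF m] by blast
    then show ?thesis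
      using \<open>v$m = w$m\<close> assms vw_k by auto
  qed
  then show ?thesis
    by (simp add: vec_eq_iff)
qed

lemma affine_dependent_imp_parallel:
  assumes "s \<in> F" "t \<in> F" "v \<in> \<tau> - F" "w \<in> \<tau> - F" "affine_dependent {s, t, v, w}"
  shows "\<exists>\<alpha>. w - v = \<alpha> *\<^sub>R (s - t)"
proof -
  have "\<not> affine_dependent (insert v {s, t})"
    using affine_independent_insert_coordinate[OF affine_independent_2, where i = k and c = 0]
      assms F_coord_k coord_k_outside_F by simp
  moreover have "affine_dependent (insert w (insert v {s, t}))"
    using assms(5) by (simp add: insert_commute)
  ultimately have "w \<in> affine hull {v, s, t}"
    using affine_independent_insert by (metis insert_commute)
  then obtain c1 c2 c3 where c: "c1 + c2 + c3 = 1" "w = c1 *\<^sub>R v + c2 *\<^sub>R s + c3 *\<^sub>R t"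
    unfolding affine_hull_3 by blast
  then have "w$k = c1 * v$k + c2 * s$k + c3 * t$k"
    by simp
  then have "c1 = 1"
    using assms F_coord_k coord_k_outside_F by simp
  then have "c3 = - c2"
    using c(1) by simp
  then have "w - v = c2 *\<^sub>R (s - t)"
    using c(2) \<open>c1 = 1\<close> by (simp add: algebra_simps)
  then show ?thesis ..
qed

lemma affine_independent_other_edge_simplex:
  assumes "F = {s, t, r}" "v \<in> \<tau> - F" "w \<in> \<tau> - F" "v \<noteq> w"
    and "affine_dependent {s, t, v, w}"
  shows "\<not> affine_dependent {s, r, v, w}"
proof
  assume "affine_dependent {s, r, v, w}"
  obtain \<alpha> \<beta> where \<alpha>: "w - v = \<alpha> *\<^sub>R (s - t)" and \<beta>: "w - v = \<beta> *\<^sub>R (s - r)"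
    using affine_dependent_imp_parallel assms \<open>affine_dependent {s, r, v, w}\<close> by (metis insertCI)
  have "\<beta> \<noteq> 0"
    using \<beta> assms(4) by auto
  then have "r = (1 - \<alpha> / \<beta>) *\<^sub>R s + (\<alpha> / \<beta>) *\<^sub>R t"
    using \<alpha> \<beta> by (simp add: vec_eq_iff field_simps)
  then have "r \<in> affine hull {s, t}"
    unfolding affine_hull_2 by force
  moreover have "F - {r} = {s, t}" "r \<in> F"
    using assms(1) card_F by (auto simp: card_insert_if split: if_splits)
  ultimately show False
    using F_indep unfolding affine_dependent_def by metis
qed

lemma independent_edge_simplex_zero_coord:
  assumes "s \<in> F" "t \<in> F" "s \<noteq> t" "v \<in> \<tau> - F" "w \<in> \<tau> - F" "v \<noteq> w"
    and "\<not> affine_dependent {s, t, v, w}"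
  obtains i where "i \<noteq> k" "v$i = 0" "w$i = 0" "{s$i, t$i} = {0, 1}"
proof -
  have k: "s$k = 0" "t$k = 0" "v$k = 1" "w$k = 1"
    using assms F_coord_k coord_k_outside_F by simp_all
  then have "s \<noteq> v" "s \<noteq> w" "t \<noteq> v" "t \<noteq> w"
    by auto
  then have "card {s, t, v, w} = 4"
    using assms(3,6) by simp
  moreover have "{s, t, v, w} \<subseteq> \<tau>"
    using assms F_subset by blast
  ultimately obtain i y where y: "y \<in> {s, t, v, w}" "y$i = 1"
    and zero: "\<forall>x\<in>{s, t, v, w}. x \<noteq> y \<longrightarrow> x$i = 0"
    using B_simplex_subsetE assms(7) by metis
  have "i \<noteq> k"
  proof
    assume "i = k"
    then have "v = y" "w = y"
      using zero k by auto
    then show False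
      using assms(6) by simp
  qed
  have "y \<in> {s, t}"
  proof (rule ccontr)
    assume "y \<notin> {s, t}"
    then have "s$i = 0" "t$i = 0"
      using zero by auto
    then show False
      using F_common_zero_coord[OF \<open>i \<noteq> k\<close> assms(1,2)] assms(3) by simp
  qed
  then have "v$i = 0" "w$i = 0" "{s$i, t$i} = {0, 1}"
    using zero y \<open>s \<noteq> v\<close> \<open>s \<noteq> w\<close> \<open>t \<noteq> v\<close> \<open>t \<noteq> w\<close> assms(3)
    by (auto simp: insert_commute)
  then show ?thesis
    using that \<open>i \<noteq> k\<close> by blast
qed

definition marks :: "4 \<Rightarrow> real^4 \<Rightarrow> bool" where
  "marks i z \<longleftrightarrow> i \<noteq> k \<and> z \<in> F \<and> (\<forall>x\<in>F. x$i = (if x = z then 0 else 1))"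

lemma marks_unique_coord: "marks i z \<Longrightarrow> marks j z \<Longrightarrow> i = j"
  using F_two_zero_coords by (auto simp: marks_def)

lemma marked_zero_coord_if_independent_edge_simplices:
  assumes "F = {s, t, r}" "v \<in> \<tau> - F" "w \<in> \<tau> - F" "v \<noteq> w"
    and "\<not> affine_dependent {s, t, v, w}" "\<not> affine_dependent {s, r, v, w}"
  shows "\<exists>i z. marks i z \<and> v$i = 0 \<and> w$i = 0"
proof -
  have distinct: "s \<noteq> t" "s \<noteq> r" "t \<noteq> r"
    using card_F assms(1) by (auto simp: card_insert_if split: if_splits)
  obtain i where i: "i \<noteq> k" "v$i = 0" "w$i = 0" "{s$i, t$i} = {0, 1}"
    using independent_edge_simplex_zero_coord[of s t v w] assms distinct by auto
  obtain j where j: "j \<noteq> k" "v$j = 0" "w$j = 0" "{s$j, r$j} = {0, 1}"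
    using independent_edge_simplex_zero_coord[of s r v w] assms distinct by auto
  have "i = j"
    using outside_eq_if_two_zero_coords[of v w i j] assms(2-4) i j by auto
  show ?thesis
  proof (cases "s$i = 0")
    case True
    then have "marks i s"
      using i j \<open>i = j\<close> assms(1) unfolding marks_def by (auto simp: doubleton_eq_iff)
    then show ?thesis
      using i by blast
  next
    case False
    then have "t$i = 0" "r$i = 0"
      using i j \<open>i = j\<close> by (auto simp: doubleton_eq_iff)
    then show ?thesis
      using F_common_zero_coord[of i t r] i(1) assms(1) distinct by simp
  qed
qed

lemma outside_pair_marked_zero_coord:
  assumes "v \<in> \<tau> - F" "w \<in> \<tau> - F" "v \<noteq> w"
  obtains i z where "marks i z" "v$i = 0" "w$i = 0"
proof -
  obtain p q r where F: "F = {p, q, r}"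
    using card_F card_3_iff by metis
  have F': "F = {q, p, r}" "F = {r, p, q}"
    using F by auto
  have "\<exists>s t r. F = {s, t, r} \<and> \<not> affine_dependent {s, t, v, w} \<and> \<not> affine_dependent {s, r, v, w}"
  proof (cases "affine_dependent {p, q, v, w}")
    case True
    then have "\<not> affine_dependent {p, r, v, w}" "\<not> affine_dependent {q, r, v, w}"
      using affine_independent_other_edge_simplex[OF F assms] affine_independent_other_edge_simplex[OF F'(1) assms]
      by (simp_all add: insert_commute)
    then show ?thesis
      using F'(2) by (intro exI[of _ r] exI[of _ p] exI[of _ q]) (simp add: insert_commute)
  next
    case independent_pq: False
    show ?thesis
    proof (cases "affine_dependent {p, r, v, w}")
      case True
      then have "\<not> affine_dependent {q, r, v, w}"
        using affine_independent_other_edge_simplex[OF F'(2) assms] by (simp add: insert_commute)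
      then show ?thesis
        using F'(1) independent_pq
        by (intro exI[of _ q] exI[of _ p] exI[of _ r]) (simp add: insert_commute)
    next
      case False
      then show ?thesis
        using F independent_pq by blast
    qed
  qed
  then show ?thesis
    using marked_zero_coord_if_independent_edge_simplices[OF _ assms] that by blast
qed

lemma B1_facet_if_single_outside:
  assumes "\<tau> - F = {v}"
  shows "B1_facet \<tau>"
  unfolding B1_facet_def
proof (intro exI bexI conjI ballI impI)
  show "v \<in> \<tau>" "v$k = 1"
    using assms coord_k_outside_F by auto
  fix x
  assume "x \<in> \<tau>" "x$k \<noteq> 0"
  then show "x = v"
    using assms F_coord_k by blast
qed

lemma B2_facet_if_marking_coord_vanishes_outside:
  assumes "marks i z" "\<forall>y\<in>\<tau> - F. y$i = 0"
  shows "B2_facet \<tau>"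
  unfolding B2_facet_def
proof (intro exI conjI ballI)
  show "i \<noteq> k"
    using assms(1) by (simp add: marks_def)
  fix x
  assume "x \<in> \<tau>"
  then show "(x$i, x$k) \<in> {(0, 0), (1, 0), (0, 1)}"
    using assms F_coord_k coord_k_outside_F by (cases "x \<in> F") (auto simp: marks_def)
qed

lemma affine_independent_marked_simplex:
  assumes "marks i z" "v \<in> \<tau> - F" "w \<in> \<tau> - F" "v \<noteq> w" "v$i = 0" "w$i = 0"
    and "u \<in> \<tau> - F" "u$i \<noteq> 0"
  shows "card {z, u, v, w} = 4" "\<not> affine_dependent {z, u, v, w}"
proof -
  have z: "z \<in> F" "z$i = 0" "z$k = 0"
    using assms(1) F_coord_k by (auto simp: marks_def)
  have k: "u$k = 1" "v$k = 1" "w$k = 1"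
    using assms coord_k_outside_F by simp_all
  have "z \<noteq> u" "z \<noteq> v" "z \<noteq> w" "u \<noteq> v" "u \<noteq> w"
    using z k assms by auto
  then show "card {z, u, v, w} = 4"
    using assms(4) by simp
  have "\<not> affine_dependent (insert z {v, w})"
    using affine_independent_insert_coordinate[OF affine_independent_2, where i = k and c = 1] z k
    by simp
  then show "\<not> affine_dependent {z, u, v, w}"
    using affine_independent_insert_coordinate[where i = i and c = 0] z assms
    by (simp add: insert_commute)
qed

lemma marking_coord_outside_eq_1:
  assumes "marks i z" "v \<in> \<tau> - F" "w \<in> \<tau> - F" "v \<noteq> w" "v$i = 0" "w$i = 0"
    and "u \<in> \<tau> - F" "u$i \<noteq> 0"
  shows "u$i = 1"
proof -
  have z: "z \<in> F" "z$i = 0" "i \<noteq> k"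
    using assms(1) by (auto simp: marks_def)
  have k: "u$k = 1" "v$k = 1" "w$k = 1"
    using assms coord_k_outside_F by simp_all
  have "{z, u, v, w} \<subseteq> \<tau>"
    using z assms F_subset by blast
  then obtain l y where y: "y \<in> {z, u, v, w}" "y$l = 1"
    and zero: "\<forall>x\<in>{z, u, v, w}. x \<noteq> y \<longrightarrow> x$l = 0"
    using B_simplex_subsetE affine_independent_marked_simplex[OF assms] by metis
  have "l \<noteq> k"
  proof
    assume "l = k"
    then have "v = y" "w = y"
      using zero k by auto
    then show False
      using assms(4) by simp
  qed
  have "l = i"
  proof (rule ccontr)
    assume "l \<noteq> i"
    show False
    proof (cases "y \<in> {v, w}")
      case True
      then have "z$l = 0"
        using zero z assms by auto
      then show False
        using F_two_zero_coords[of l i z] z \<open>l \<noteq> k\<close> \<open>l \<noteq> i\<close> by simp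
    next
      case False
      then have "v$l = 0" "w$l = 0"
        using zero by auto
      then show False
        using outside_eq_if_two_zero_coords[of v w i l] assms z \<open>l \<noteq> k\<close> \<open>l \<noteq> i\<close> by auto
    qed
  qed
  then have "y = u"
    using zero assms(8) by auto
  then show ?thesis
    using y \<open>l = i\<close> by simp
qed

lemma three_marks_coords:
  assumes "marks i1 s1" "marks i2 s2" "marks i3 s3" "distinct [i1, i2, i3]"
  shows "distinct [i1, i2, i3, k]" "F = {s1, s2, s3}"
    and "s1$i1 = 0" "s1$i2 = 1" "s1$i3 = 1"
    and "s2$i1 = 1" "s2$i2 = 0" "s2$i3 = 1"
    and "s3$i1 = 1" "s3$i2 = 1" "s3$i3 = 0"
proof -
  have "s1 \<noteq> s2" "s1 \<noteq> s3" "s2 \<noteq> s3"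
    using assms marks_unique_coord by auto
  then have "card {s1, s2, s3} = card F"
    using card_F by simp
  moreover have "{s1, s2, s3} \<subseteq> F"
    using assms by (simp add: marks_def)
  moreover have "finite F"
    using card_F by (intro card_ge_0_finite) simp
  ultimately show "F = {s1, s2, s3}"
    using card_subset_eq by blast
  show "distinct [i1, i2, i3, k]"
    using assms by (auto simp: marks_def)
  show "s1$i1 = 0" "s1$i2 = 1" "s1$i3 = 1" "s2$i1 = 1" "s2$i2 = 0" "s2$i3 = 1"
      "s3$i1 = 1" "s3$i2 = 1" "s3$i3 = 0"
    using assms \<open>s1 \<noteq> s2\<close> \<open>s1 \<noteq> s3\<close> \<open>s2 \<noteq> s3\<close> by (auto simp: marks_def)
qed

lemma equal_weights_if_three_marks:
  assumes "marks i1 s1" "marks i2 s2" "marks i3 s3" "distinct [i1, i2, i3]"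
    and "u \<in> \<tau> - F" "u$i1 = 1" "u$i2 = 0" "u$i3 = 0"
  shows "a$j = b / 2"
proof -
  note coords = three_marks_coords[OF assms(1-4)]
  have inner: "a \<bullet> x = a$i1 * x$i1 + a$i2 * x$i2 + a$i3 * x$i3 + a$k * x$k" for x
    unfolding inner_vec_def sum_UNIV_4_distinct[OF coords(1)] by simp
  have "s1 \<in> \<tau>" "s2 \<in> \<tau>" "s3 \<in> \<tau>"
    using coords(2) F_subset by auto
  then have "a$i2 + a$i3 = b" "a$i1 + a$i3 = b" "a$i1 + a$i2 = b" "a$i1 + a$k = b"
    using on_hyperplane[of s1] on_hyperplane[of s2] on_hyperplane[of s3] on_hyperplane[of u]
      coords F_coord_k[of s1] F_coord_k[of s2] F_coord_k[of s3] coord_k_outside_F[of u] assms(5-8)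
    unfolding inner by auto
  moreover have "j \<in> {i1, i2, i3, k}"
    using UNIV_4_eq[OF coords(1)] by blast
  ultimately show ?thesis
    by auto
qed

lemma F_coords_01_if_three_marks:
  assumes "marks i1 s1" "marks i2 s2" "marks i3 s3" "distinct [i1, i2, i3]" "x \<in> F"
  shows "x$j = 0 \<or> x$j = 1"
proof -
  have "j \<in> {i1, i2, i3, k}"
    using UNIV_4_eq[OF three_marks_coords(1)[OF assms(1-4)]] by blast
  then show ?thesis
    using assms F_coord_k by (auto simp: marks_def split: if_splits)
qed

lemma subset_cross_polytope_if_equal_weights:
  assumes "\<And>j. a$j = b / 2" "\<And>x j. x \<in> F \<Longrightarrow> x$j = 0 \<or> x$j = 1"
  shows "\<tau> \<subseteq> cross_polytope"
proof
  fix x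
  assume x: "x \<in> \<tau>"
  have "b > 0"
    using a_pos assms(1) by (metis half_gt_zero_iff)
  have "b / 2 * (\<Sum>j\<in>UNIV. x$j) = b"
    using on_hyperplane[OF x] assms(1) by (simp add: inner_vec_def sum_distrib_left)
  then have sum: "(\<Sum>j\<in>UNIV. x$j) = 2"
    using \<open>b > 0\<close> by (simp add: field_simps)
  have "x$j = 0 \<or> x$j = 1" for j
  proof (cases "x \<in> F")
    case False
    then have "x$k = 1"
      using coord_k_outside_F x by blast
    have nonneg: "0 \<le> x$l" for l
      using x \<tau>_lattice by (auto simp: lattice_nonneg_def)
    have "x$j \<le> 1"
    proof (cases "j = k")
      case False
      then have "x$j + x$k \<le> (\<Sum>l\<in>UNIV. x$l)"
        using sum_mono2[of UNIV "{j, k}" "\<lambda>l. x$l"] nonneg by simp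
      then show ?thesis
        using sum \<open>x$k = 1\<close> by simp
    qed (simp add: \<open>x$k = 1\<close>)
    then show ?thesis
      using lattice_nonneg_coord_01 x \<tau>_lattice by blast
  qed (use assms(2) in blast)
  then show "x \<in> cross_polytope"
    using cross_polytopeI sum by blast
qed

lemma six_le_card_if_three_outside:
  assumes "{u, v, w} \<subseteq> \<tau> - F" "card {u, v, w} = 3"
  shows "6 \<le> card \<tau>"
proof -
  have "3 \<le> card (\<tau> - F)"
    using card_mono[OF _ assms(1)] finite_\<tau> assms(2) by simp
  moreover have "card (\<tau> - F) = card \<tau> - card F"
    using card_Diff_subset[OF finite_subset[OF F_subset finite_\<tau>] F_subset] .
  moreover have "card F \<le> card \<tau>"
    using card_mono[OF finite_\<tau> F_subset] .
  ultimately show ?thesis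
    using card_F by linarith
qed

lemma cross_polytope_if_no_marking_coord_vanishes_outside:
  assumes "v \<in> \<tau> - F" "w \<in> \<tau> - F" "v \<noteq> w"
    and "\<And>i z. marks i z \<Longrightarrow> \<exists>y\<in>\<tau> - F. y$i \<noteq> 0"
  shows "\<tau> = cross_polytope"
proof -
  obtain i1 s1 where m1: "marks i1 s1" "v$i1 = 0" "w$i1 = 0"
    using outside_pair_marked_zero_coord[OF assms(1-3)] .
  obtain u where u: "u \<in> \<tau> - F" "u$i1 \<noteq> 0"
    using assms(4)[OF m1(1)] by blast
  then have "u \<noteq> v" "u \<noteq> w"
    using m1 by auto
  obtain i2 s2 where m2: "marks i2 s2" "u$i2 = 0" "v$i2 = 0"
    using outside_pair_marked_zero_coord[OF u(1) assms(1) \<open>u \<noteq> v\<close>] .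
  obtain i3 s3 where m3: "marks i3 s3" "u$i3 = 0" "w$i3 = 0"
    using outside_pair_marked_zero_coord[OF u(1) assms(2) \<open>u \<noteq> w\<close>] .
  have "i1 \<noteq> i2" "i1 \<noteq> i3"
    using u m2 m3 by auto
  moreover have "i2 \<noteq> i3"
    using outside_eq_if_two_zero_coords[of v w i1 i2] assms m1 m2 m3 \<open>i1 \<noteq> i2\<close>
    by (auto simp: marks_def)
  ultimately have i: "distinct [i1, i2, i3]"
    by simp
  have "u$i1 = 1"
    using marking_coord_outside_eq_1[OF m1(1) assms(1-3) m1(2,3) u] .
  then have "\<tau> \<subseteq> cross_polytope"
    using subset_cross_polytope_if_equal_weights equal_weights_if_three_marks[OF m1(1) m2(1) m3(1) i u(1)]
      F_coords_01_if_three_marks[OF m1(1) m2(1) m3(1) i] m2 m3 by blast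
  moreover have "6 \<le> card \<tau>"
    using six_le_card_if_three_outside[of u v w] u(1) assms(1-3) \<open>u \<noteq> v\<close> \<open>u \<noteq> w\<close> by simp
  ultimately show ?thesis
    using card_cross_polytope card_subset_eq[OF _ \<open>\<tau> \<subseteq> cross_polytope\<close>]
    by (metis card_mono card.infinite le_antisym zero_neq_numeral)
qed

end

theorem lemma2p7:
  fixes \<tau> F :: "(real^4) set"
  assumes "B_facet \<tau>"
    and "internal_V_face \<tau> F"
    and "card F = 3"
    and "\<not> affine_dependent F"
  shows "B1_facet \<tau> \<or> B2_facet \<tau> \<or> \<tau> = cross_polytope"
proof -
  obtain a b where "\<forall>j. a$j > 0" "affine hull \<tau> = {x. a \<bullet> x = b}"
    using assms(1) unfolding B_facet_def by blast
  moreover obtain k where "\<forall>x\<in>F. x$k = 0"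
    using V_face_triangle_in_coordinate_hyperplane assms(2-4)
    unfolding internal_V_face_def by blast
  ultimately interpret internal_triangle \<tau> F a b k
    using assms by unfold_locales auto
  obtain v where v: "v \<in> \<tau> - F"
    using outside_F_nonempty by blast
  show ?thesis
  proof (cases "\<tau> - F = {v}")
    case True
    then show ?thesis
      using B1_facet_if_single_outside by blast
  next
    case False
    then obtain w where w: "w \<in> \<tau> - F" "v \<noteq> w"
      using v by blast
    show ?thesis
    proof (cases "\<exists>i z. marks i z \<and> (\<forall>y\<in>\<tau> - F. y$i = 0)")
      case True
      then show ?thesis
        using B2_facet_if_marking_coord_vanishes_outside by blast
    next
      case False
      then show ?thesis
        using cross_polytope_if_no_marking_coord_vanishes_outside[OF v w] by blast
    qed
  qed
qed

end
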